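(* Let $X$ be a connected finite rack. There exists $N$ (depending on $X$) such that for every integer $n\ge N$ and every $(x_1,\dots,x_n)\in X^n$ such that $x_1,\dots,x_n$ generate $X$, the image $H$ in $S_n$ of the stabilizer $\operatorname{Stab}(x_1,\dots,x_n)\le B_n$ under the homomorphism $B_n\to S_n$ is either $A_n$ or $S_n$. If moreover $X$ is a quandle, then $H=S_n$.
   Context: A rack is a set $X$ with a binary operation $(x,y)\mapsto x^y$ such that for each $y$ the map $x\mapsto x^y$ is a bijection of $X$, and $(z^x)^y=(z^y)^{x^y}$ for all $x,y,z$. It is a quandle if moreover $x^x=x$ for all $x$. A subset $X_0\subseteq X$ is a subrack if $x^y\in X_0$ for all $x,y\in X_0$; elements $x_1,\dots,x_n$ generate $X$ if no proper subrack contains them. A finite rack is connected if the directed graph with vertex set $X$ and edges $(x,x^y)$ for $(x,y)\in X\times X$ is connected. The braid group $B_n$ is generated by $\sigma_1,\dots,\sigma_{n-1}$ with relations $\sigma_i\sigma_j=\sigma_j\sigma_i$ for $|i-j|>1$ and $\sigma_i\sigma_{i+1}\sigma_i=\sigma_{i+1}\sigma_i\sigma_{i+1}$; it acts on $X^n$ from the right by $(c_1,\dots,c_i,c_{i+1},\dots,c_n)^{\sigma_i}=(c_1,\dots,c_{i+1},c_i^{c_{i+1}},\dots,c_n)$. The homomorphism $B_n\to S_n$ sends $\sigma_i$ to the transposition $(i\ i+1)$. *)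

theory Defs
  imports "HOL-Combinatorics.Permutations"
begin

text \<open>A rack on the carrier X with operation op, where op x y stands for x^y.\<close>
definition rack :: "'a set \<Rightarrow> ('a \<Rightarrow> 'a \<Rightarrow> 'a) \<Rightarrow> bool" where
  "rack X op \<longleftrightarrow>
     (\<forall>x\<in>X. \<forall>y\<in>X. op x y \<in> X) \<and>
     (\<forall>y\<in>X. bij_betw (\<lambda>x. op x y) X X) \<and>
     (\<forall>x\<in>X. \<forall>y\<in>X. \<forall>z\<in>X. op (op z x) y = op (op z y) (op x y))"

definition quandle :: "'a set \<Rightarrow> ('a \<Rightarrow> 'a \<Rightarrow> 'a) \<Rightarrow> bool" where
  "quandle X op \<longleftrightarrow> rack X op \<and> (\<forall>x\<in>X. op x x = x)"

definition subrack :: "'a set \<Rightarrow> ('a \<Rightarrow> 'a \<Rightarrow> 'a) \<Rightarrow> 'a set \<Rightarrow> bool" where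
  "subrack X op X0 \<longleftrightarrow> X0 \<subseteq> X \<and> (\<forall>x\<in>X0. \<forall>y\<in>X0. op x y \<in> X0)"

definition rack_generates :: "'a set \<Rightarrow> ('a \<Rightarrow> 'a \<Rightarrow> 'a) \<Rightarrow> 'a set \<Rightarrow> bool" where
  "rack_generates X op S \<longleftrightarrow> S \<subseteq> X \<and> (\<forall>X0. subrack X op X0 \<and> S \<subseteq> X0 \<longrightarrow> X0 = X)"

definition rack_edges :: "'a set \<Rightarrow> ('a \<Rightarrow> 'a \<Rightarrow> 'a) \<Rightarrow> ('a \<times> 'a) set" where
  "rack_edges X op = {(x, op x y) | x y. x \<in> X \<and> y \<in> X}"

definition rack_connected :: "'a set \<Rightarrow> ('a \<Rightarrow> 'a \<Rightarrow> 'a) \<Rightarrow> bool" where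
  "rack_connected X op \<longleftrightarrow>
     (\<forall>x\<in>X. \<forall>z\<in>X. (x, z) \<in> (rack_edges X op \<union> (rack_edges X op)\<inverse>)\<^sup>*)"

text \<open>Braid words: a letter (i, True) is sigma_(i+1), (i, False) its inverse
  (0-based positions: the letter acts on positions i and i+1 of a list of length n,
   valid iff i+1 < n).\<close>
type_synonym braid_word = "(nat \<times> bool) list"

definition braid_word_ok :: "nat \<Rightarrow> braid_word \<Rightarrow> bool" where
  "braid_word_ok n w \<longleftrightarrow> (\<forall>(i, b)\<in>set w. Suc i < n)"

fun braid_letter_act :: "'a set \<Rightarrow> ('a \<Rightarrow> 'a \<Rightarrow> 'a) \<Rightarrow> nat \<times> bool \<Rightarrow> 'a list \<Rightarrow> 'a list" where
  "braid_letter_act X op (i, True) c = c[i := c ! Suc i, Suc i := op (c ! i) (c ! Suc i)]"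
| "braid_letter_act X op (i, False) c =
     c[i := inv_into X (\<lambda>z. op z (c ! i)) (c ! Suc i), Suc i := c ! i]"

definition braid_act :: "'a set \<Rightarrow> ('a \<Rightarrow> 'a \<Rightarrow> 'a) \<Rightarrow> braid_word \<Rightarrow> 'a list \<Rightarrow> 'a list" where
  "braid_act X op w c = fold (braid_letter_act X op) w c"

definition braid_perm :: "braid_word \<Rightarrow> nat \<Rightarrow> nat" where
  "braid_perm w = foldr (\<lambda>(i, b) p. transpose i (Suc i) \<circ> p) w id"

definition stab_image :: "'a set \<Rightarrow> ('a \<Rightarrow> 'a \<Rightarrow> 'a) \<Rightarrow> nat \<Rightarrow> 'a list \<Rightarrow> (nat \<Rightarrow> nat) set" where
  "stab_image X op n c = {braid_perm w | w. braid_word_ok n w \<and> braid_act X op w c = c}"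

definition sym_group :: "nat \<Rightarrow> (nat \<Rightarrow> nat) set" where
  "sym_group n = {p. p permutes {0..<n}}"

definition alt_group :: "nat \<Rightarrow> (nat \<Rightarrow> nat) set" where
  "alt_group n = {p. p permutes {0..<n} \<and> evenperm p}"

end

theory Submission
  imports Defs "HOL-Combinatorics.Cycles"
begin

(* Every right translation of the finite rack X is a permutation of X, so some K > 1 is a
   common period of all of them.  A long tuple contains K + 1 copies of some y, and a braid
   gathers them at the front, as a block of K copies of y followed by a generating rest.
   Sliding the block past an entry v of the rest and back is a pure braid that turns each
   block entry into y^v; since the rest generates X and X is connected, pure braids turn the
   block into K copies of any b in X.  Choosing b equal to the entry at position s, the braid
   sigma_2 sigma_1 sigma_2^-2, transported to positions 0, 1, s, stabilizes the tuple and
   induces the 3-cycle (0 1 s); these 3-cycles generate A_n.  In a quandle sigma_1 already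
   fixes (b, b), which yields every transposition (0 s) and hence S_n.  Stabilizers of tuples
   in one braid orbit are conjugate in S_n, and A_n and S_n are normal. *)

lemma split_list_at_pair:
  "Suc i < length c \<Longrightarrow> \<exists>P u v Q. c = P @ u # v # Q \<and> length P = i"
  by (intro exI[of _ "take i c"] exI[of _ "c ! i"] exI[of _ "c ! Suc i"]
      exI[of _ "drop (Suc (Suc i)) c"]) (simp add: Cons_nth_drop_Suc)

lemma pigeonhole_nth:
  assumes "finite X" "set c \<subseteq> X" "card X * M < length c"
  shows "\<exists>y\<in>X. M < card {k. k < length c \<and> c ! k = y}"
proof (rule ccontr)
  assume "\<not> ?thesis"
  then have le: "\<forall>y\<in>X. card {k. k < length c \<and> c ! k = y} \<le> M" by auto
  have "{..<length c} \<subseteq> (\<Union>y\<in>X. {k. k < length c \<and> c ! k = y})"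
    using assms(2) nth_mem by fastforce
  then have "card {..<length c} \<le> card (\<Union>y\<in>X. {k. k < length c \<and> c ! k = y})"
    by (rule card_mono[rotated]) (use assms(1) in auto)
  also have "\<dots> \<le> (\<Sum>y\<in>X. card {k. k < length c \<and> c ! k = y})"
    by (rule card_UN_le[OF assms(1)])
  also have "\<dots> \<le> card X * M" using sum_bounded_above[of X _ M] le by simp
  finally show False using assms(3) by simp
qed

section \<open>Subgroups of the symmetric group containing the alternating group\<close>

lemma transpose_conj_star:
  "a \<noteq> 0 \<Longrightarrow> b \<noteq> 0 \<Longrightarrow> a \<noteq> b \<Longrightarrow> transpose a b = transpose 0 a \<circ> transpose 0 b \<circ> transpose 0 a"
  by (rule ext) (simp add: transpose_def)

lemma transpose_star_comp_square:
  "1 < a \<Longrightarrow> transpose 0 a \<circ> transpose 0 (1::nat) =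
     (transpose 0 1 \<circ> transpose 0 a) \<circ> (transpose 0 1 \<circ> transpose 0 a)"
  by (rule ext) (simp add: transpose_def)

lemma alt_group_conj:
  assumes "Q permutes {0..<n}" "p \<in> alt_group n"
  shows "inv Q \<circ> p \<circ> Q \<in> alt_group n"
proof -
  have p: "p permutes {0..<n}" "evenperm p" using assms(2) unfolding alt_group_def by auto
  have "permutation p" "permutation Q"
    using p(1) assms(1) by (simp_all add: permutes_imp_permutation[OF finite_atLeastLessThan])
  then show ?thesis
    using p assms(1) unfolding alt_group_def
    by (simp add: permutes_compose permutes_inv evenperm_comp evenperm_inv
        permutation_compose permutation_inverse)
qed

lemma sym_group_conj:
  "Q permutes {0..<n} \<Longrightarrow> p \<in> sym_group n \<Longrightarrow> inv Q \<circ> p \<circ> Q \<in> sym_group n"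
  unfolding sym_group_def by (simp add: permutes_compose permutes_inv)

lemma conj_transpose:
  assumes "bij P"
  shows "P \<circ> transpose a b \<circ> inv P = transpose (P a) (P b)"
proof -
  have "transpose (P a) (P b) \<circ> P = P \<circ> transpose a b"
    using transpose_comp_eq[OF assms, of "P a" "P b"] bij_is_inj[OF assms] by simp
  then have "transpose (P a) (P b) \<circ> (P \<circ> inv P) = P \<circ> transpose a b \<circ> inv P"
    by (simp flip: comp_assoc)
  then show ?thesis using bij_is_surj[OF assms] by (simp add: surj_iff)
qed

lemma conj_comp: "bij P \<Longrightarrow> P \<circ> (p \<circ> q) \<circ> inv P = (P \<circ> p \<circ> inv P) \<circ> (P \<circ> q \<circ> inv P)"
  using bij_is_inj[of P] by (simp add: fun_eq_iff)

locale permutation_monoid =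
  fixes G :: "(nat \<Rightarrow> nat) set" and n :: nat
  assumes id_mem: "id \<in> G"
    and comp_mem: "p \<in> G \<Longrightarrow> q \<in> G \<Longrightarrow> p \<circ> q \<in> G"
    and subset_sym_group: "G \<subseteq> sym_group n"
begin

context
  fixes a b :: nat
  assumes pairs: "\<And>a b. 0 < a \<Longrightarrow> a < n \<Longrightarrow> 0 < b \<Longrightarrow> b < n \<Longrightarrow> transpose 0 a \<circ> transpose 0 b \<in> G"
    and ab: "a < n" "b < n" "a \<noteq> b"
begin

lemma star_comp_transpose_mem:
  assumes "0 < x" "x < n"
  shows "transpose 0 x \<circ> transpose a b \<in> G"
proof (cases "a = 0 \<or> b = 0")
  case False
  then have "transpose 0 x \<circ> transpose a b =
      (transpose 0 x \<circ> transpose 0 a) \<circ> (transpose 0 b \<circ> transpose 0 a)"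
    using transpose_conj_star[OF _ _ ab(3)] by (simp add: comp_assoc)
  then show ?thesis using comp_mem[OF pairs pairs] assms ab False by simp
next
  case True
  then obtain y where "0 < y" "y < n" "transpose a b = transpose 0 y"
    using ab by (metis transpose_commute gr0I)
  then show ?thesis using pairs assms by simp
qed

lemma transpose_comp_mem:
  assumes "\<And>x. 0 < x \<Longrightarrow> x < n \<Longrightarrow> transpose 0 x \<circ> q \<in> G"
  shows "transpose a b \<circ> q \<in> G"
proof (cases "a = 0 \<or> b = 0")
  case False
  have "(transpose 0 a \<circ> transpose 0 b) \<circ> (transpose 0 a \<circ> q) \<in> G"
    using comp_mem pairs assms ab False by simp
  then show ?thesis using transpose_conj_star[OF _ _ ab(3)] False by (simp add: comp_assoc)
next
  case True
  then obtain y where "0 < y" "y < n" "transpose a b = transpose 0 y"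
    using ab by (metis transpose_commute gr0I)
  then show ?thesis using assms by simp
qed

end

lemma alt_group_subset_if_star_pairs:
  assumes pairs: "\<And>a b. 0 < a \<Longrightarrow> a < n \<Longrightarrow> 0 < b \<Longrightarrow> b < n \<Longrightarrow> transpose 0 a \<circ> transpose 0 b \<in> G"
  shows "alt_group n \<subseteq> G"
proof
  fix p assume "p \<in> alt_group n"
  then have p: "p permutes {0..<n}" "evenperm p" unfolding alt_group_def by auto
  have "(evenperm p \<longrightarrow> p \<in> G) \<and>
        (\<not> evenperm p \<longrightarrow> (\<forall>x. 0 < x \<longrightarrow> x < n \<longrightarrow> transpose 0 x \<circ> p \<in> G))"
    using p(1) finite_atLeastLessThan
  proof (induction rule: permutes_induct)
    case id
    show ?case using id_mem by (simp add: id_def)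
  next
    case (swap a b q)
    have ab: "a < n" "b < n" "a \<noteq> b" using swap.hyps(1-3) by auto
    have parity: "evenperm (transpose a b \<circ> q) \<longleftrightarrow> \<not> evenperm q"
      using evenperm_comp[OF permutation_swap_id permutes_imp_permutation[OF _ swap.hyps(4)]]
        ab(3) by (simp add: evenperm_swap)
    show ?case
    proof (cases "evenperm q")
      case True
      then have "transpose 0 x \<circ> (transpose a b \<circ> q) \<in> G" if "0 < x" "x < n" for x
        using comp_mem[OF star_comp_transpose_mem[OF pairs ab that]] swap.IH
        by (simp flip: comp_assoc)
      then show ?thesis using parity True by blast
    next
      case False
      then show ?thesis using transpose_comp_mem[OF pairs ab] swap.IH parity by blast
    qed
  qed
  then show "p \<in> G" using p(2) by blast
qed

lemma alt_group_subset_if_three_cycles: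
  assumes cycles: "\<And>s. 1 < s \<Longrightarrow> s < n \<Longrightarrow> transpose 0 1 \<circ> transpose 0 s \<in> G"
  shows "alt_group n \<subseteq> G"
proof (rule alt_group_subset_if_star_pairs)
  fix a b :: nat assume ab: "0 < a" "a < n" "0 < b" "b < n"
  have left: "transpose 0 a \<circ> transpose 0 1 \<in> G"
  proof (cases "a = 1")
    case False
    then have "1 < a" using ab(1) by simp
    then show ?thesis
      using comp_mem[OF cycles cycles] ab(2) by (simp only: transpose_star_comp_square)
  qed (simp add: id_mem)
  have right: "transpose 0 1 \<circ> transpose 0 b \<in> G"
    using ab(3,4) cycles id_mem by (cases "b = 1") simp_all
  have "transpose 0 a \<circ> transpose 0 b = (transpose 0 a \<circ> transpose 0 1) \<circ> (transpose 0 1 \<circ> transpose 0 b)"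
    by (rule ext) simp
  then show "transpose 0 a \<circ> transpose 0 b \<in> G" using comp_mem[OF left right] by simp
qed

lemma eq_sym_group_if_odd:
  assumes alt: "alt_group n \<subseteq> G" and "p \<in> G" "\<not> evenperm p"
  shows "G = sym_group n"
proof -
  have p: "p permutes {0..<n}" using assms(2) subset_sym_group unfolding sym_group_def by auto
  have "q \<in> G" if q: "q permutes {0..<n}" for q
  proof (cases "evenperm q")
    case True
    then show ?thesis using q alt unfolding alt_group_def by auto
  next
    case False
    have "permutation p" "permutation q"
      using p q by (simp_all add: permutes_imp_permutation[OF finite_atLeastLessThan])
    then have "inv p \<circ> q \<in> alt_group n"
      using p q False assms(3) unfolding alt_group_def
      by (simp add: permutes_compose permutes_inv evenperm_comp evenperm_inv permutation_inverse)
    then have "p \<circ> (inv p \<circ> q) \<in> G" using alt comp_mem[OF assms(2)] by blast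
    then show ?thesis using permutes_inv_o(1)[OF p] by (simp add: o_assoc)
  qed
  then show ?thesis using subset_sym_group unfolding sym_group_def by blast
qed

lemma eq_alt_group_or_sym_group:
  "alt_group n \<subseteq> G \<Longrightarrow> G = alt_group n \<or> G = sym_group n"
  using eq_sym_group_if_odd subset_sym_group unfolding alt_group_def sym_group_def by blast

lemma eq_sym_group_if_star_transpositions:
  assumes "\<And>s. 0 < s \<Longrightarrow> s < n \<Longrightarrow> transpose 0 s \<in> G" and "1 < n"
  shows "G = sym_group n"
proof (rule eq_sym_group_if_odd)
  show "alt_group n \<subseteq> G"
    using assms by (intro alt_group_subset_if_three_cycles comp_mem) auto
  show "transpose 0 1 \<in> G" "\<not> evenperm (transpose 0 (1::nat))"
    using assms by (auto simp: evenperm_swap)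
qed

end

section \<open>Braid words and their permutations\<close>

lemma braid_word_ok_append [simp]:
  "braid_word_ok n (v @ w) \<longleftrightarrow> braid_word_ok n v \<and> braid_word_ok n w"
  unfolding braid_word_ok_def by auto

lemma braid_perm_Nil [simp]: "braid_perm [] = id"
  by (simp add: braid_perm_def)

lemma braid_perm_Cons [simp]: "braid_perm (l # w) = transpose (fst l) (Suc (fst l)) \<circ> braid_perm w"
  by (simp add: braid_perm_def case_prod_beta)

lemma braid_perm_append: "braid_perm (v @ w) = braid_perm v \<circ> braid_perm w"
  by (induction v) (simp_all add: comp_assoc)

lemma braid_perm_permutes: "braid_word_ok n w \<Longrightarrow> braid_perm w permutes {0..<n}"
  unfolding braid_word_ok_def
  by (induction w) (auto intro!: permutes_compose permutes_swap_id)

lemma braid_perm_eq_if_map_fst_eq: "map fst v = map fst w \<Longrightarrow> braid_perm v = braid_perm w"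
proof (induction v arbitrary: w)
  case (Cons l v)
  then obtain l' w' where "w = l' # w'" "fst l = fst l'" "map fst v = map fst w'" by auto
  then show ?case using Cons.IH by simp
qed simp

definition braid_word_inv :: "braid_word \<Rightarrow> braid_word" where
  "braid_word_inv w = rev (map (\<lambda>(i, b). (i, \<not> b)) w)"

lemma braid_word_inv_Cons: "braid_word_inv (l # w) = braid_word_inv w @ [(fst l, \<not> snd l)]"
  unfolding braid_word_inv_def by (cases l) auto

lemma map_fst_braid_word_inv [simp]: "map fst (braid_word_inv w) = rev (map fst w)"
  unfolding braid_word_inv_def by (induction w) auto

lemma braid_word_inv_inv [simp]: "braid_word_inv (braid_word_inv w) = w"
  unfolding braid_word_inv_def by (induction w) auto

lemma braid_word_ok_inv [simp]: "braid_word_ok n (braid_word_inv w) \<longleftrightarrow> braid_word_ok n w"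
  unfolding braid_word_inv_def braid_word_ok_def by auto

lemma braid_perm_comp_inv: "braid_perm w \<circ> braid_perm (braid_word_inv w) = id"
proof (induction w)
  case (Cons l w)
  let ?t = "transpose (fst l) (Suc (fst l))"
  have "braid_perm (l # w) \<circ> braid_perm (braid_word_inv (l # w))
      = ?t \<circ> (braid_perm w \<circ> braid_perm (braid_word_inv w)) \<circ> ?t"
    by (simp add: braid_word_inv_Cons braid_perm_append comp_assoc)
  then show ?case by (simp only: Cons.IH comp_id transpose_comp_involutory)
qed (simp add: braid_word_inv_def)

lemma braid_perm_inv: "inv (braid_perm w) = braid_perm (braid_word_inv w)"
  using braid_perm_comp_inv[of w] braid_perm_comp_inv[of "braid_word_inv w"]
  by (intro inv_unique_comp) simp_all

definition sweep_left :: "bool \<Rightarrow> nat \<Rightarrow> nat \<Rightarrow> braid_word" where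
  "sweep_left b i k = map (\<lambda>j. (j, b)) (rev [i..<i + k])"

definition sweep_right :: "bool \<Rightarrow> nat \<Rightarrow> nat \<Rightarrow> braid_word" where
  "sweep_right b i k = map (\<lambda>j. (j, b)) [i..<i + k]"

lemma sweep_left_Suc: "sweep_left b i (Suc k) = (i + k, b) # sweep_left b i k"
  unfolding sweep_left_def by simp

lemma sweep_right_Suc: "sweep_right b i (Suc k) = (i, b) # sweep_right b (Suc i) k"
  unfolding sweep_right_def by (simp add: upt_rec)

lemma braid_word_ok_sweep_left: "i + k < n \<Longrightarrow> braid_word_ok n (sweep_left b i k)"
  unfolding sweep_left_def braid_word_ok_def by auto

lemma braid_perm_sweep_left:
  "braid_perm (sweep_left b i k) i = i + k"
  "m < i \<Longrightarrow> braid_perm (sweep_left b i k) m = m"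
  by (induction k) (auto simp: sweep_left_Suc sweep_left_def)

text \<open>The braid \<open>\<sigma>\<^sub>2 \<sigma>\<^sub>1 \<sigma>\<^sub>2\<^sup>-\<^sup>2\<close> fixes every triple \<open>(b, b, b)\<close> of a rack, since
  \<open>x^(b^b) = x^b\<close>, while its image in \<open>S\<^sub>n\<close> is a 3-cycle.\<close>
definition omega :: braid_word where
  "omega = [(1, True), (0, True), (1, False), (1, False)]"

lemma braid_perm_omega: "braid_perm omega = transpose 1 2 \<circ> transpose 0 1"
  by (simp add: omega_def numeral_2_eq_2)

section \<open>The braid group action on tuples of a finite rack\<close>

locale finite_rack =
  fixes X :: "'a set" and op :: "'a \<Rightarrow> 'a \<Rightarrow> 'a"
  assumes rack: "rack X op" and finite_carrier: "finite X"
begin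

lemma op_closed: "x \<in> X \<Longrightarrow> y \<in> X \<Longrightarrow> op x y \<in> X"
  using rack unfolding rack_def by blast

lemma bij_betw_op: "y \<in> X \<Longrightarrow> bij_betw (\<lambda>x. op x y) X X"
  using rack unfolding rack_def by blast

lemma op_self_distrib: "x \<in> X \<Longrightarrow> y \<in> X \<Longrightarrow> z \<in> X \<Longrightarrow> op (op z x) y = op (op z y) (op x y)"
  using rack unfolding rack_def by blast

abbreviation rdiv :: "'a \<Rightarrow> 'a \<Rightarrow> 'a" where
  "rdiv v w \<equiv> inv_into X (\<lambda>z. op z v) w"

lemma rdiv_closed: "v \<in> X \<Longrightarrow> w \<in> X \<Longrightarrow> rdiv v w \<in> X"
  using bij_betw_op[of v] by (metis bij_betw_def inv_into_into)

lemma op_rdiv: "v \<in> X \<Longrightarrow> w \<in> X \<Longrightarrow> op (rdiv v w) v = w"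
  using bij_betw_op[of v] by (metis bij_betw_def f_inv_into_f)

lemma rdiv_op: "v \<in> X \<Longrightarrow> w \<in> X \<Longrightarrow> rdiv v (op w v) = w"
  using bij_betw_op[of v] by (metis bij_betw_def inv_into_f_f)

lemma length_braid_letter_act [simp]: "length (braid_letter_act X op l c) = length c"
  by (cases l; cases "snd l") auto

lemma braid_letter_act_True:
  "length P = i \<Longrightarrow> braid_letter_act X op (i, True) (P @ u # v # Q) = P @ v # op u v # Q"
  by (simp add: list_update_append nth_append)

lemma braid_letter_act_False:
  "length P = i \<Longrightarrow> braid_letter_act X op (i, False) (P @ u # v # Q) = P @ rdiv u v # u # Q"
  by (simp add: list_update_append nth_append)

declare braid_letter_act.simps [simp del]

lemma braid_act_Nil [simp]: "braid_act X op [] c = c"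
  unfolding braid_act_def by simp

lemma braid_act_Cons: "braid_act X op (l # w) c = braid_act X op w (braid_letter_act X op l c)"
  unfolding braid_act_def by simp

lemma braid_act_append: "braid_act X op (v @ w) c = braid_act X op w (braid_act X op v c)"
  unfolding braid_act_def by simp

lemma length_braid_act [simp]: "length (braid_act X op w c) = length c"
  unfolding braid_act_def by (induction w arbitrary: c) auto

lemma set_braid_letter_act:
  assumes "set c \<subseteq> X" "Suc i < length c"
  shows "set (braid_letter_act X op (i, b) c) \<subseteq> X"
proof -
  obtain P u v Q where c: "c = P @ u # v # Q" "length P = i"
    using split_list_at_pair[OF assms(2)] by blast
  then have "u \<in> X" "v \<in> X" using assms(1) by auto
  then show ?thesis
    using assms(1) c op_closed rdiv_closed
    by (cases b) (auto simp: braid_letter_act_True braid_letter_act_False)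
qed

lemma braid_letter_act_inv:
  assumes "set c \<subseteq> X" "Suc i < length c"
  shows "braid_letter_act X op (i, \<not> b) (braid_letter_act X op (i, b) c) = c"
proof -
  obtain P u v Q where c: "c = P @ u # v # Q" "length P = i"
    using split_list_at_pair[OF assms(2)] by blast
  then have "u \<in> X" "v \<in> X" using assms(1) by auto
  then show ?thesis
    using c by (cases b) (simp_all add: braid_letter_act_True braid_letter_act_False op_rdiv rdiv_op)
qed

lemma braid_act_invariant:
  assumes "set c \<subseteq> X" "braid_word_ok (length c) w" "P c"
    and "\<And>c i b. set c \<subseteq> X \<Longrightarrow> Suc i < length c \<Longrightarrow> P c \<Longrightarrow> P (braid_letter_act X op (i, b) c)"
  shows "set (braid_act X op w c) \<subseteq> X \<and> P (braid_act X op w c)"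
  using assms(1-3)
proof (induction w arbitrary: c)
  case (Cons l w)
  obtain i b where l: "l = (i, b)" by (cases l)
  then have i: "Suc i < length c" using Cons.prems(2) unfolding braid_word_ok_def by auto
  show ?case
    using Cons.IH[of "braid_letter_act X op l c"] Cons.prems assms(4)[OF _ i] set_braid_letter_act[OF _ i]
    unfolding l braid_word_ok_def by (simp add: braid_act_Cons)
qed simp

lemma set_braid_act: "set c \<subseteq> X \<Longrightarrow> braid_word_ok (length c) w \<Longrightarrow> set (braid_act X op w c) \<subseteq> X"
  using braid_act_invariant[where P = "\<lambda>_. True"] by blast

lemma braid_act_inv:
  assumes "set c \<subseteq> X" "braid_word_ok (length c) w"
  shows "braid_act X op (braid_word_inv w) (braid_act X op w c) = c"
  using assms
proof (induction w arbitrary: c)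
  case (Cons l w)
  obtain i b where l: "l = (i, b)" by (cases l)
  then have i: "Suc i < length c" using Cons.prems(2) unfolding braid_word_ok_def by auto
  define c1 where "c1 = braid_letter_act X op l c"
  have "set c1 \<subseteq> X" "braid_word_ok (length c1) w"
    using set_braid_letter_act[OF Cons.prems(1) i] Cons.prems(2)
    unfolding c1_def l braid_word_ok_def by auto
  then show ?case
    using Cons.IH braid_letter_act_inv[OF Cons.prems(1) i]
    by (simp add: braid_word_inv_Cons braid_act_append braid_act_Cons c1_def l)
qed (simp add: braid_word_inv_def)

abbreviation stab :: "'a list \<Rightarrow> (nat \<Rightarrow> nat) set" where
  "stab c \<equiv> stab_image X op (length c) c"

lemma braid_perm_mem_stab:
  "braid_word_ok (length c) w \<Longrightarrow> braid_act X op w c = c \<Longrightarrow> braid_perm w \<in> stab c"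
  unfolding stab_image_def by blast

lemma permutation_monoid_stab: "permutation_monoid (stab c) (length c)"
proof
  show "id \<in> stab c"
    using braid_perm_mem_stab[of c "[]"] by (simp add: braid_word_ok_def)
  show "p \<circ> q \<in> stab c" if "p \<in> stab c" "q \<in> stab c" for p q
    using that unfolding stab_image_def
    by (clarsimp, metis braid_perm_append braid_act_append braid_word_ok_append)
  show "stab c \<subseteq> sym_group (length c)"
    unfolding stab_image_def sym_group_def using braid_perm_permutes by blast
qed

lemma conj_mem_stab:
  assumes "set c \<subseteq> X" "braid_word_ok (length c) d" "p \<in> stab (braid_act X op d c)"
  shows "braid_perm d \<circ> p \<circ> inv (braid_perm d) \<in> stab c"
proof -
  obtain w where w: "braid_word_ok (length c) w" "p = braid_perm w"
    "braid_act X op w (braid_act X op d c) = braid_act X op d c"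
    using assms(3) unfolding stab_image_def by auto
  have "braid_act X op (d @ w @ braid_word_inv d) c = c"
    using w(3) braid_act_inv[OF assms(1,2)] by (simp add: braid_act_append)
  then have "braid_perm (d @ w @ braid_word_inv d) \<in> stab c"
    using w(1) assms(2) by (intro braid_perm_mem_stab) simp_all
  then show ?thesis by (simp add: braid_perm_append braid_perm_inv w(2) comp_assoc)
qed

lemma mem_stab_if_pure:
  assumes "set c \<subseteq> X" "braid_word_ok (length c) d" "braid_perm d = id"
    and "p \<in> stab (braid_act X op d c)"
  shows "p \<in> stab c"
  using conj_mem_stab[OF assms(1,2,4)] assms(3) by simp

lemma subset_stab_if_subset_stab_braid_act:
  assumes "set c \<subseteq> X" "braid_word_ok (length c) d" "S \<subseteq> stab (braid_act X op d c)"
    and conj: "\<And>p Q. p \<in> S \<Longrightarrow> Q permutes {0..<length c} \<Longrightarrow> inv Q \<circ> p \<circ> Q \<in> S"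
  shows "S \<subseteq> stab c"
proof
  fix p assume "p \<in> S"
  let ?Q = "braid_perm d"
  have Q: "?Q permutes {0..<length c}" using braid_perm_permutes[OF assms(2)] .
  have "?Q \<circ> (inv ?Q \<circ> p \<circ> ?Q) \<circ> inv ?Q \<in> stab c"
    using conj_mem_stab[OF assms(1,2)] conj[OF \<open>p \<in> S\<close> Q] assms(3) by blast
  moreover have "?Q \<circ> (inv ?Q \<circ> p \<circ> ?Q) \<circ> inv ?Q = p"
    by (rule ext) (simp add: permutes_inverses[OF Q])
  ultimately show "p \<in> stab c" by simp
qed

text \<open>Finiteness makes right translations bijective on every subrack, so subracks are
  closed under right division.\<close>
lemma subrack_rdiv_closed:
  assumes "subrack X op Y" "v \<in> Y" "w \<in> Y"
  shows "rdiv v w \<in> Y"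
proof -
  have Y: "Y \<subseteq> X" "\<forall>x\<in>Y. \<forall>y\<in>Y. op x y \<in> Y" using assms(1) unfolding subrack_def by auto
  have "inj_on (\<lambda>z. op z v) Y"
    using bij_betw_op[of v] assms(2) Y(1) unfolding bij_betw_def by (meson inj_on_subset subsetD)
  then have "(\<lambda>z. op z v) ` Y = Y"
    using Y assms(2) finite_subset[OF Y(1) finite_carrier] by (intro endo_inj_surj) auto
  then obtain u where "u \<in> Y" "w = op u v" using assms(3) by blast
  moreover have "u \<in> X" "v \<in> X" using \<open>u \<in> Y\<close> assms(2) Y(1) by auto
  ultimately show ?thesis by (simp add: rdiv_op)
qed

lemma rack_generates_braid_letter_act:
  assumes "set c \<subseteq> X" "Suc i < length c" "rack_generates X op (set c)"
  shows "rack_generates X op (set (braid_letter_act X op (i, b) c))"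
  unfolding rack_generates_def
proof (intro conjI allI impI)
  show "set (braid_letter_act X op (i, b) c) \<subseteq> X" using set_braid_letter_act assms(1,2) .
  fix Y assume Y: "subrack X op Y \<and> set (braid_letter_act X op (i, b) c) \<subseteq> Y"
  obtain P u v Q where c: "c = P @ u # v # Q" "length P = i"
    using split_list_at_pair[OF assms(2)] by blast
  have uv: "u \<in> X" "v \<in> X" using assms(1) c by auto
  have "u \<in> Y \<and> v \<in> Y"
  proof (cases b)
    case True
    then have "v \<in> Y" "op u v \<in> Y" using Y c by (auto simp: braid_letter_act_True)
    then show ?thesis using subrack_rdiv_closed[of Y v "op u v"] Y rdiv_op uv by auto
  next
    case False
    then have "u \<in> Y" "rdiv u v \<in> Y" using Y c by (auto simp: braid_letter_act_False)
    then show ?thesis using Y op_rdiv[OF uv] unfolding subrack_def by metis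
  qed
  then have "set c \<subseteq> Y"
    using Y c by (cases b) (auto simp: braid_letter_act_True braid_letter_act_False)
  then show "Y = X" using Y assms(3) unfolding rack_generates_def by blast
qed

lemma rack_generates_braid_act:
  "set c \<subseteq> X \<Longrightarrow> braid_word_ok (length c) w \<Longrightarrow> rack_generates X op (set c) \<Longrightarrow>
    rack_generates X op (set (braid_act X op w c))"
  using braid_act_invariant[where P = "\<lambda>c. rack_generates X op (set c)"]
    rack_generates_braid_letter_act by blast

definition translation_period :: "nat \<Rightarrow> bool" where
  "translation_period K \<longleftrightarrow> (\<forall>x\<in>X. \<forall>z\<in>X. ((\<lambda>z. op z x) ^^ K) z = z)"

lemma translation_power_closed: "x \<in> X \<Longrightarrow> z \<in> X \<Longrightarrow> ((\<lambda>z. op z x) ^^ k) z \<in> X"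
  by (induction k) (auto intro: op_closed)

text \<open>All right translations together form a single permutation of the finite set
  \<open>X \<times> X\<close>; a common period is a period of that permutation.\<close>
lemma ex_translation_period: "\<exists>K>1. translation_period K"
proof -
  define F where "F = (\<lambda>(x, z). if x \<in> X \<and> z \<in> X then (x, op z x) else (x, z))"
  have "inj_on F (X \<times> X)"
    unfolding F_def inj_on_def by (auto, metis rdiv_op)
  moreover have "F ` (X \<times> X) \<subseteq> X \<times> X" unfolding F_def by (auto intro: op_closed)
  ultimately have "bij_betw F (X \<times> X) (X \<times> X)"
    using finite_carrier by (simp add: bij_betw_def endo_inj_surj)
  then have "F permutes X \<times> X" by (rule bij_imp_permutes) (auto simp: F_def split: if_splits)
  then have "permutation F" using finite_carrier by (auto simp: permutation_permutes)
  then obtain K where K: "F ^^ K = id" "K > 1" by (rule permutation_is_nilpotent')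
  have "(F ^^ k) (x, z) = (x, ((\<lambda>z. op z x) ^^ k) z)" if "x \<in> X" "z \<in> X" for x z k
    using that by (induction k) (simp_all add: F_def translation_power_closed)
  then show ?thesis using K unfolding translation_period_def by (metis id_apply prod.inject)
qed

lemma rdiv_power_eq_if_translation_period:
  assumes "translation_period K" "y \<in> X" "x \<in> X"
  shows "(rdiv y ^^ K) x = x"
proof -
  have "(rdiv y ^^ k) (((\<lambda>z. op z y) ^^ k) z) = z" if "z \<in> X" for k z
    using that
  proof (induction k)
    case (Suc k)
    have "(rdiv y ^^ Suc k) w = (rdiv y ^^ k) (rdiv y w)" for w
      by (simp only: funpow_Suc_right comp_apply)
    then show ?case
      using rdiv_op[OF assms(2) translation_power_closed[OF assms(2) Suc.prems]] Suc by simp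
  qed simp
  then show ?thesis using assms unfolding translation_period_def by metis
qed

subsection \<open>Moving a block of equal entries\<close>

lemma nth_braid_act_sweep_left:
  assumes "i + k < length d" "m < length d"
  shows "braid_act X op (sweep_left True i k) d ! m =
    (if m < i then d ! m else if m = i then d ! (i + k)
     else if m \<le> i + k then op (d ! (m - 1)) (d ! (i + k)) else d ! m)"
  using assms
proof (induction k arbitrary: d m)
  case (Suc k)
  define d1 where "d1 = braid_letter_act X op (i + k, True) d"
  have d1: "d1 ! m' = (if m' = i + k then d ! Suc (i + k)
                      else if m' = Suc (i + k) then op (d ! (i + k)) (d ! Suc (i + k)) else d ! m')"
    if "m' < length d" for m'
    using that Suc.prems unfolding d1_def by (auto simp: braid_letter_act.simps nth_list_update)
  have "braid_act X op (sweep_left True i (Suc k)) d ! m = braid_act X op (sweep_left True i k) d1 ! m"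
    by (simp add: sweep_left_Suc braid_act_Cons d1_def)
  also have "\<dots> = (if m < i then d1 ! m else if m = i then d1 ! (i + k)
                   else if m \<le> i + k then op (d1 ! (m - 1)) (d1 ! (i + k)) else d1 ! m)"
    using Suc.IH[of d1 m] Suc.prems by (simp add: d1_def)
  finally show ?case using Suc.prems by (auto simp: d1)
qed (simp add: sweep_left_def)

lemma braid_act_sweep_left_True:
  "length A = i \<Longrightarrow> braid_act X op (sweep_left True i k) (A @ replicate k r @ x # B)
     = A @ x # replicate k (op r x) @ B"
proof (induction k arbitrary: B)
  case (Suc k)
  have split: "A @ replicate (Suc k) r @ x # B = (A @ replicate k r) @ r # x # B"
    by (simp add: replicate_append_same[symmetric])
  have "length (A @ replicate k r) = i + k" using Suc.prems by simp
  note letter = braid_letter_act_True[OF this]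
  have "braid_act X op (sweep_left True i (Suc k)) (A @ replicate (Suc k) r @ x # B)
      = braid_act X op (sweep_left True i k) ((A @ replicate k r) @ x # op r x # B)"
    unfolding sweep_left_Suc braid_act_Cons split letter ..
  also have "\<dots> = A @ x # replicate (Suc k) (op r x) @ B"
    using Suc.IH[OF Suc.prems] by (simp add: replicate_append_same[symmetric])
  finally show ?case .
qed (simp add: sweep_left_def)

lemma braid_act_sweep_left_False:
  "length A = i \<Longrightarrow> braid_act X op (sweep_left False i k) (A @ replicate k r @ x # B)
     = A @ (rdiv r ^^ k) x # replicate k r @ B"
proof (induction k arbitrary: x B)
  case (Suc k)
  have split: "A @ replicate (Suc k) r @ x # B = (A @ replicate k r) @ r # x # B"
    by (simp add: replicate_append_same[symmetric])
  have "length (A @ replicate k r) = i + k" using Suc.prems by simp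
  note letter = braid_letter_act_False[OF this]
  have "braid_act X op (sweep_left False i (Suc k)) (A @ replicate (Suc k) r @ x # B)
      = braid_act X op (sweep_left False i k) ((A @ replicate k r) @ rdiv r x # r # B)"
    unfolding sweep_left_Suc braid_act_Cons split letter ..
  also have "\<dots> = A @ (rdiv r ^^ Suc k) x # replicate (Suc k) r @ B"
    using Suc.IH[OF Suc.prems]
    by (simp add: replicate_append_same[symmetric] funpow_Suc_right del: funpow.simps)
  finally show ?case .
qed (simp add: sweep_left_def)

lemma braid_act_sweep_right_True:
  "length A = i \<Longrightarrow> braid_act X op (sweep_right True i k) (A @ x # replicate k r @ B)
     = A @ replicate k r @ ((\<lambda>z. op z r) ^^ k) x # B"
proof (induction k arbitrary: A i x)
  case (Suc k)
  have "braid_act X op (sweep_right True i (Suc k)) (A @ x # replicate (Suc k) r @ B)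
      = braid_act X op (sweep_right True (Suc i) k) ((A @ [r]) @ op x r # replicate k r @ B)"
    using Suc.prems by (simp add: sweep_right_Suc braid_act_Cons braid_letter_act_True)
  also have "\<dots> = A @ replicate (Suc k) r @ ((\<lambda>z. op z r) ^^ Suc k) x # B"
    using Suc.IH[of "A @ [r]" "Suc i"] Suc.prems
    by (simp add: funpow_Suc_right del: funpow.simps)
  finally show ?case .
qed (simp add: sweep_right_def)

lemma braid_act_block_right:
  assumes "\<forall>x\<in>set R. (rdiv r ^^ K) x = x"
  shows "braid_act X op (concat (map (\<lambda>q. sweep_left False q K) [length A..<length A + length R]))
           (A @ replicate K r @ R @ Z) = A @ R @ replicate K r @ Z"
  using assms
proof (induction R arbitrary: A)
  case (Cons x R)
  have "[length A..<length A + length (x # R)] = length A # [length (A @ [x])..<length (A @ [x]) + length R]"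
    by (simp add: upt_rec)
  moreover have "braid_act X op (sweep_left False (length A) K) (A @ replicate K r @ x # R @ Z)
      = (A @ [x]) @ replicate K r @ R @ Z"
    using braid_act_sweep_left_False[of A "length A" K r x "R @ Z"] Cons.prems by simp
  ultimately show ?case using Cons.IH[of "A @ [x]"] Cons.prems by (simp add: braid_act_append)
qed simp

lemma braid_act_block_left:
  assumes "\<forall>x\<in>set R. ((\<lambda>z. op z r) ^^ K) x = x"
  shows "braid_act X op (concat (map (\<lambda>q. sweep_right True q K) (rev [0..<length R])))
           (R @ replicate K r @ Z) = replicate K r @ R @ Z"
  using assms
proof (induction R arbitrary: Z rule: rev_induct)
  case (snoc x R)
  have "braid_act X op (sweep_right True (length R) K) (R @ x # replicate K r @ Z)
      = R @ replicate K r @ x # Z"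
    using braid_act_sweep_right_True[of R "length R" K x r Z] snoc.prems by simp
  then show ?case using snoc.IH[of "x # Z"] snoc.prems by (simp add: braid_act_append)
qed simp

text \<open>The block slides right past the entries before \<open>v\<close> (leaving them unchanged by
  periodicity), lets \<open>v\<close> pass through it, which turns every block entry \<open>y\<close> into
  \<open>y\<^sup>v\<close>, and slides back.  The way back uses the letters of the way there in reverse
  order, so the braid is pure.\<close>
lemma pure_braid_translates_block:
  assumes period: "translation_period K" and y: "y \<in> X" and v: "v \<in> set R" and R: "set R \<subseteq> X"
  shows "\<exists>d. braid_word_ok (K + length R) d \<and> braid_perm d = id \<and>
           braid_act X op d (replicate K y @ R) = replicate K (op y v) @ R"
proof -
  obtain R1 R2 where R_eq: "R = R1 @ v # R2" using split_list[OF v] by blast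
  define m where "m = length R1"
  define d1 where "d1 = concat (map (\<lambda>q. sweep_left False q K) [0..<m])"
  define d2 where "d2 = sweep_left True m K"
  define d3 where "d3 = concat (map (\<lambda>q. sweep_right True q K) (rev [0..<Suc m]))"
  have vX: "v \<in> X" using v R by auto
  have "braid_act X op d1 (replicate K y @ R) = R1 @ replicate K y @ v # R2"
    using braid_act_block_right[where R = R1 and r = y and A = "[]" and Z = "v # R2"]
      rdiv_power_eq_if_translation_period[OF period y] R R_eq
    unfolding d1_def m_def by auto
  moreover have "braid_act X op d2 (R1 @ replicate K y @ v # R2) = R1 @ v # replicate K (op y v) @ R2"
    unfolding d2_def m_def by (rule braid_act_sweep_left_True) simp
  moreover have "braid_act X op d3 ((R1 @ [v]) @ replicate K (op y v) @ R2) = replicate K (op y v) @ R"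
    using braid_act_block_left[where R = "R1 @ [v]" and r = "op y v" and Z = R2]
      period op_closed[OF y vX] R R_eq unfolding d3_def m_def translation_period_def by auto
  ultimately have act: "braid_act X op (d1 @ d2 @ d3) (replicate K y @ R) = replicate K (op y v) @ R"
    using R_eq by (simp add: braid_act_append)
  have "map fst d3 = map fst (braid_word_inv (d1 @ d2))"
    unfolding d1_def d2_def d3_def sweep_left_def sweep_right_def
    by (simp add: map_concat comp_def rev_concat rev_map)
  then have "braid_perm d3 = braid_perm (braid_word_inv (d1 @ d2))"
    by (rule braid_perm_eq_if_map_fst_eq)
  then have "braid_perm (d1 @ d2 @ d3) = id"
    using braid_perm_comp_inv[of "d1 @ d2"] by (simp add: braid_perm_append comp_assoc)
  moreover have "braid_word_ok (K + length R) (d1 @ d2 @ d3)"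
    using R_eq unfolding d1_def d2_def d3_def m_def sweep_left_def sweep_right_def braid_word_ok_def
    by auto
  ultimately show ?thesis using act by blast
qed

definition translation_edges :: "'a set \<Rightarrow> ('a \<times> 'a) set" where
  "translation_edges W = {(p, op p v) | p v. p \<in> X \<and> v \<in> W}"

lemma pure_braid_moves_block:
  assumes period: "translation_period K" and R: "set R \<subseteq> X" and y: "y \<in> X"
    and "(y, y') \<in> (translation_edges (set R))\<^sup>*"
  shows "\<exists>d. braid_word_ok (K + length R) d \<and> braid_perm d = id \<and>
           braid_act X op d (replicate K y @ R) = replicate K y' @ R"
  using assms(4)
proof (induction rule: rtrancl_induct)
  case base
  show ?case by (rule exI[of _ "[]"]) (simp add: braid_word_ok_def)
next
  case (step y1 y2)
  obtain d where d: "braid_word_ok (K + length R) d" "braid_perm d = id"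
    "braid_act X op d (replicate K y @ R) = replicate K y1 @ R"
    using step.IH by blast
  obtain v where v: "y2 = op y1 v" "v \<in> set R" "y1 \<in> X"
    using step.hyps(2) unfolding translation_edges_def by blast
  obtain e where e: "braid_word_ok (K + length R) e" "braid_perm e = id"
    "braid_act X op e (replicate K y1 @ R) = replicate K y2 @ R"
    using pure_braid_translates_block[OF period v(3,2) R] v(1) by blast
  show ?case
    using d e by (intro exI[of _ "d @ e"]) (simp add: braid_perm_append braid_act_append)
qed

definition translation_reachable :: "'a set \<Rightarrow> 'a set" where
  "translation_reachable W = {x \<in> X. \<forall>p\<in>X. (p, op p x) \<in> (translation_edges W)\<^sup>*}"

lemma translation_edges_rtrancl_rdiv:
  assumes period: "translation_period K" "0 < K"
    and x: "x \<in> translation_reachable W" and p: "p \<in> X"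
  shows "(p, rdiv x p) \<in> (translation_edges W)\<^sup>*"
proof -
  have xX: "x \<in> X" using x unfolding translation_reachable_def by blast
  have power: "(p, ((\<lambda>z. op z x) ^^ m) p) \<in> (translation_edges W)\<^sup>*" for m
  proof (induction m)
    case (Suc m)
    have "((\<lambda>z. op z x) ^^ m) p \<in> X" using translation_power_closed xX p by blast
    then show ?case using Suc x unfolding translation_reachable_def by (auto elim: rtrancl_trans)
  qed simp
  \<comment> \<open>Dividing by \<open>x\<close> is multiplying by \<open>x\<close> \<open>K - 1\<close> times.\<close>
  obtain k where k: "K = Suc k" using period(2) by (cases K) auto
  have "rdiv x p = ((\<lambda>z. op z x) ^^ K) (rdiv x p)"
    using period(1) xX rdiv_closed[OF xX p] unfolding translation_period_def by simp
  also have "\<dots> = ((\<lambda>z. op z x) ^^ k) p"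
    using op_rdiv[OF xX p] by (simp only: k funpow_Suc_right comp_apply)
  finally show ?thesis using power by simp
qed

lemma subrack_translation_reachable:
  assumes "translation_period K" "0 < K"
  shows "subrack X op (translation_reachable W)"
  unfolding subrack_def
proof (intro conjI ballI)
  let ?E = "(translation_edges W)\<^sup>*"
  show "translation_reachable W \<subseteq> X" unfolding translation_reachable_def by blast
  fix x z assume x: "x \<in> translation_reachable W" and z: "z \<in> translation_reachable W"
  then have xX: "x \<in> X" and zX: "z \<in> X" unfolding translation_reachable_def by auto
  have "(p, op p (op x z)) \<in> ?E" if p: "p \<in> X" for p
  proof -
    define p' where "p' = rdiv z p"
    have p'X: "p' \<in> X" using rdiv_closed zX p p'_def by blast
    have "(p, p') \<in> ?E" using translation_edges_rtrancl_rdiv[OF assms z p] p'_def by simp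
    moreover have "(p', op p' x) \<in> ?E" using x p'X unfolding translation_reachable_def by blast
    moreover have "(op p' x, op (op p' x) z) \<in> ?E"
      using z op_closed[OF p'X xX] unfolding translation_reachable_def by blast
    moreover have "op (op p' x) z = op p (op x z)"
      using op_self_distrib[OF xX zX p'X] op_rdiv[OF zX p] p'_def by simp
    ultimately show ?thesis by (metis rtrancl_trans)
  qed
  then show "op x z \<in> translation_reachable W"
    unfolding translation_reachable_def using op_closed[OF xX zX] by blast
qed

lemma translation_edges_rtrancl:
  assumes period: "translation_period K" "0 < K"
    and gen: "rack_generates X op W" and conn: "rack_connected X op"
    and "a \<in> X" "b \<in> X"
  shows "(a, b) \<in> (translation_edges W)\<^sup>*"
proof -
  let ?E = "(translation_edges W)\<^sup>*"
  have "W \<subseteq> translation_reachable W"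
    using gen unfolding rack_generates_def translation_reachable_def translation_edges_def by blast
  then have reachable: "translation_reachable W = X"
    using gen subrack_translation_reachable[OF period] unfolding rack_generates_def by blast
  have "rack_edges X op \<union> (rack_edges X op)\<inverse> \<subseteq> ?E"
  proof
    fix e assume "e \<in> rack_edges X op \<union> (rack_edges X op)\<inverse>"
    then obtain x y where xy: "x \<in> X" "y \<in> X" "e = (x, op x y) \<or> e = (op x y, x)"
      unfolding rack_edges_def by blast
    have "(op x y, x) \<in> ?E"
      using translation_edges_rtrancl_rdiv[OF period, of y W "op x y"] reachable xy
        op_closed rdiv_op by simp
    then show "e \<in> ?E" using xy reachable unfolding translation_reachable_def by blast
  qed
  then show ?thesis
    using conn assms(5,6) rtrancl_subset_rtrancl unfolding rack_connected_def by blast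
qed

lemma braid_gathers_next_occurrence:
  assumes prefix: "\<forall>k<i. c ! k = y" and "0 < card {k. i \<le> k \<and> k < length c \<and> c ! k = y}"
  shows "\<exists>d. braid_word_ok (length c) d \<and> (\<forall>k<Suc i. braid_act X op d c ! k = y) \<and>
           card {k. i \<le> k \<and> k < length c \<and> c ! k = y} - 1
             \<le> card {k. Suc i \<le> k \<and> k < length c \<and> braid_act X op d c ! k = y}"
proof -
  define S where "S = {k. i \<le> k \<and> k < length c \<and> c ! k = y}"
  have "finite S" "S \<noteq> {}" using assms(2) unfolding S_def by (simp_all add: card_gt_0_iff)
  define j where "j = Min S"
  have j: "j \<in> S" "\<forall>k\<in>S. j \<le> k"
    using Min_in[OF \<open>finite S\<close> \<open>S \<noteq> {}\<close>] Min_le[OF \<open>finite S\<close>] unfolding j_def by auto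
  then have ij: "i \<le> j" "j < length c" "c ! j = y" unfolding S_def by auto
  define d where "d = sweep_left True i (j - i)"
  have nth: "braid_act X op d c ! k = (if k < i then c ! k else if k = i then c ! j
              else if k \<le> j then op (c ! (k - 1)) (c ! j) else c ! k)" if "k < length c" for k
    using nth_braid_act_sweep_left[of i "j - i" c k] ij that unfolding d_def by simp
  have "S - {j} \<subseteq> {k. Suc i \<le> k \<and> k < length c \<and> braid_act X op d c ! k = y}"
    using j nth ij(1) unfolding S_def by force
  then have "card (S - {j}) \<le> card {k. Suc i \<le> k \<and> k < length c \<and> braid_act X op d c ! k = y}"
    by (rule card_mono[rotated]) simp
  moreover have "\<forall>k<Suc i. braid_act X op d c ! k = y" using nth prefix ij by (auto simp: less_Suc_eq)
  moreover have "braid_word_ok (length c) d"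
    using ij braid_word_ok_sweep_left[of i "j - i"] unfolding d_def by simp
  ultimately show ?thesis using card_Diff_singleton[OF j(1)] unfolding S_def by auto
qed

lemma braid_gathers_occurrences:
  assumes "m \<le> card {k. k < length c \<and> c ! k = y}"
  shows "\<exists>d. braid_word_ok (length c) d \<and> (\<forall>k<m. braid_act X op d c ! k = y)"
proof -
  define M where "M = card {k. k < length c \<and> c ! k = y}"
  have "\<exists>d. braid_word_ok (length c) d \<and> (\<forall>k<i. braid_act X op d c ! k = y) \<and>
          M - i \<le> card {k. i \<le> k \<and> k < length c \<and> braid_act X op d c ! k = y}"
    if "i \<le> M" for i
    using that
  proof (induction i)
    case 0
    show ?case by (rule exI[of _ "[]"]) (simp add: braid_word_ok_def M_def)
  next
    case (Suc i)
    then obtain d where d: "braid_word_ok (length c) d" "\<forall>k<i. braid_act X op d c ! k = y"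
      "M - i \<le> card {k. i \<le> k \<and> k < length c \<and> braid_act X op d c ! k = y}" by auto
    have "0 < card {k. i \<le> k \<and> k < length (braid_act X op d c) \<and> braid_act X op d c ! k = y}"
      using d(3) Suc.prems by simp
    then obtain e where e: "braid_word_ok (length c) e"
      "\<forall>k<Suc i. braid_act X op e (braid_act X op d c) ! k = y"
      "card {k. i \<le> k \<and> k < length c \<and> braid_act X op d c ! k = y} - 1
         \<le> card {k. Suc i \<le> k \<and> k < length c \<and> braid_act X op e (braid_act X op d c) ! k = y}"
      using braid_gathers_next_occurrence[OF d(2)] by auto
    then show ?case
      using d(1,3) by (intro exI[of _ "d @ e"]) (auto simp: braid_act_append)
  qed
  then show ?thesis using assms unfolding M_def by blast
qed

lemma ex_braid_word_to_block:
  assumes "set c \<subseteq> X" "card X * K < length c"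
  shows "\<exists>d y R. braid_word_ok (length c) d \<and> braid_act X op d c = replicate K y @ y # R"
proof -
  obtain y where "K < card {k. k < length c \<and> c ! k = y}"
    using pigeonhole_nth[OF finite_carrier assms] by blast
  then obtain d where d: "braid_word_ok (length c) d" "\<forall>k<Suc K. braid_act X op d c ! k = y"
    using braid_gathers_occurrences[of "Suc K" c y] by auto
  have "card {k. k < length c \<and> c ! k = y} \<le> card {..<length c}"
    by (rule card_mono) auto
  then have "Suc K \<le> length c" using \<open>K < card _\<close> by simp
  then have "take (Suc K) (braid_act X op d c) = replicate (Suc K) y"
    using d(2) by (intro nth_equalityI) (simp_all del: replicate_Suc)
  then have "braid_act X op d c = replicate K y @ y # drop (Suc K) (braid_act X op d c)"
    using append_take_drop_id[of "Suc K" "braid_act X op d c"] by (simp add: replicate_app_Cons_same)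
  then show ?thesis using d(1) by blast
qed

lemma op_op_self: "x \<in> X \<Longrightarrow> b \<in> X \<Longrightarrow> op x (op b b) = op x b"
  using op_self_distrib[of b b "rdiv b x"] op_rdiv rdiv_closed by simp

lemma braid_act_omega: "b \<in> X \<Longrightarrow> braid_act X op omega (b # b # b # T) = b # b # b # T"
  using braid_letter_act_True[of "[b]" 1 b b "T"] braid_letter_act_True[of "[]" 0 b b "op b b # T"]
    braid_letter_act_False[of "[b]" 1 "op b b" "op b b" T] braid_letter_act_False[of "[b]" 1 b "op b b" T]
    rdiv_op[of "op b b" b] rdiv_op[of b b] op_op_self[of b b] op_closed[of b b]
  by (simp add: omega_def braid_act_Cons)

lemma three_cycle_mem_stab:
  assumes d: "set d \<subseteq> X" and s: "1 < s" "s < length d" and eq: "d ! 0 = d ! s" "d ! 1 = d ! s"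
  shows "transpose 0 1 \<circ> transpose 0 s \<in> stab d"
proof -
  let ?w = "sweep_left True 2 (s - 2)"
  let ?P = "braid_perm ?w"
  define d' where "d' = braid_act X op ?w d"
  have ok: "braid_word_ok (length d) ?w" using s by (intro braid_word_ok_sweep_left) simp
  have s_eq: "2 + (s - 2) = s" using s by simp
  have entries: "d' ! m = d ! s" if "m \<le> 2" for m
    using nth_braid_act_sweep_left[of 2 "s - 2" d m, unfolded s_eq] s eq that unfolding d'_def
    by (auto simp: le_Suc_eq numeral_2_eq_2)
  have "Suc (Suc (Suc 0)) \<le> length d'" using s unfolding d'_def by simp
  then obtain a b c T where "d' = a # b # c # T" by (auto simp: Suc_le_length_iff)
  then have "d' = d ! s # d ! s # d ! s # T"
    using entries[of 0] entries[of 1] entries[of 2] by simp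
  moreover have "d ! s \<in> X" using d s by auto
  ultimately have "braid_act X op omega d' = d'" by (metis braid_act_omega)
  moreover have "braid_word_ok (length d') omega"
    using s unfolding d'_def omega_def braid_word_ok_def by auto
  ultimately have "transpose 1 2 \<circ> transpose 0 1 \<in> stab d'"
    using braid_perm_mem_stab[of d' omega] by (simp only: braid_perm_omega)
  then have "?P \<circ> (transpose 1 2 \<circ> transpose 0 1) \<circ> inv ?P \<in> stab d"
    using conj_mem_stab[OF d ok] unfolding d'_def by simp
  moreover have "?P \<circ> (transpose 1 2 \<circ> transpose 0 1) \<circ> inv ?P = transpose 1 s \<circ> transpose 0 1"
    using permutes_bij[OF braid_perm_permutes[OF ok]]
      braid_perm_sweep_left[where i = 2 and k = "s - 2", unfolded s_eq]
    by (simp add: conj_comp conj_transpose)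
  moreover have "transpose 1 s \<circ> transpose 0 1 = transpose 0 1 \<circ> transpose 0 s"
    using s by (rule_tac ext) (simp add: transpose_def)
  ultimately show ?thesis by simp
qed

lemma transposition_mem_stab:
  assumes quandle: "quandle X op" and d: "set d \<subseteq> X" and s: "0 < s" "s < length d"
    and eq: "d ! 0 = d ! s"
  shows "transpose 0 s \<in> stab d"
proof -
  let ?w = "sweep_left True 1 (s - 1)"
  let ?P = "braid_perm ?w"
  define d' where "d' = braid_act X op ?w d"
  have ok: "braid_word_ok (length d) ?w" using s by (intro braid_word_ok_sweep_left) simp
  have entries: "d' ! m = d ! s" if "m \<le> 1" for m
    using nth_braid_act_sweep_left[of 1 "s - 1" d m] s eq that unfolding d'_def
    by (auto simp: le_Suc_eq)
  have "Suc (Suc 0) \<le> length d'" using s unfolding d'_def by simp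
  then obtain a b T where "d' = a # b # T" by (auto simp: Suc_le_length_iff)
  then have d'_eq: "d' = d ! s # d ! s # T" using entries[of 0] entries[of 1] by simp
  have "d ! s \<in> X" using d s by auto
  then have "op (d ! s) (d ! s) = d ! s" using quandle unfolding quandle_def by blast
  then have "braid_act X op [(0, True)] d' = d'"
    using braid_letter_act_True[of "[]" 0 "d ! s" "d ! s" T] unfolding d'_eq
    by (simp add: braid_act_Cons)
  then have "transpose 0 1 \<in> stab d'"
    using braid_perm_mem_stab[of d' "[(0, True)]"] s unfolding d'_def braid_word_ok_def by auto
  then have "?P \<circ> transpose 0 1 \<circ> inv ?P \<in> stab d"
    using conj_mem_stab[OF d ok] unfolding d'_def by simp
  then show ?thesis
    using permutes_bij[OF braid_perm_permutes[OF ok]] braid_perm_sweep_left[where i = 1 and k = "s - 1"] s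
    by (simp add: conj_transpose)
qed

lemma pure_braid_equalizes_block:
  assumes conn: "rack_connected X op" and period: "translation_period K" "1 < K"
    and R: "set (y # R) \<subseteq> X" "rack_generates X op (set (y # R))"
    and s: "s < K + length (y # R)"
  defines "c \<equiv> replicate K y @ y # R"
  shows "\<exists>d. braid_word_ok (length c) d \<and> braid_perm d = id \<and>
           braid_act X op d c ! 0 = c ! s \<and> braid_act X op d c ! 1 = c ! s \<and>
           braid_act X op d c ! s = c ! s"
proof -
  have "set c \<subseteq> X" "s < length c" using R s unfolding c_def by auto
  then have "c ! s \<in> X" by auto
  moreover have y: "y \<in> X" using R(1) by simp
  ultimately have "(y, c ! s) \<in> (translation_edges (set (y # R)))\<^sup>*"
    using translation_edges_rtrancl[OF period(1) _ R(2) conn] period(2) by simp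
  then obtain d where d: "braid_word_ok (K + length (y # R)) d" "braid_perm d = id"
    "braid_act X op d c = replicate K (c ! s) @ y # R"
    using pure_braid_moves_block[OF period(1) R(1) y, folded c_def] by blast
  have "(replicate K (c ! s) @ y # R) ! s = c ! s"
    using s unfolding c_def by (auto simp: nth_append)
  moreover have "length c = K + length (y # R)" unfolding c_def by simp
  ultimately show ?thesis using d period(2) by (auto simp: nth_append)
qed

lemma stab_of_block:
  assumes conn: "rack_connected X op" and period: "translation_period K" "1 < K"
    and R: "set (y # R) \<subseteq> X" "rack_generates X op (set (y # R))"
  defines "c \<equiv> replicate K y @ y # R"
  shows "alt_group (length c) \<subseteq> stab c \<and> (quandle X op \<longrightarrow> stab c = sym_group (length c))"
proof -
  have c: "set c \<subseteq> X" using R period(2) unfolding c_def by auto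
  note equalize = pure_braid_equalizes_block[OF conn period R, folded c_def]
  interpret stab_c: permutation_monoid "stab c" "length c" by (rule permutation_monoid_stab)
  have "transpose 0 1 \<circ> transpose 0 s \<in> stab c" if s: "1 < s" "s < length c" for s
  proof -
    obtain d where d: "braid_word_ok (length c) d" "braid_perm d = id"
      "braid_act X op d c ! 0 = c ! s" "braid_act X op d c ! 1 = c ! s"
      "braid_act X op d c ! s = c ! s"
      using equalize[of s] s unfolding c_def by auto
    then have "transpose 0 1 \<circ> transpose 0 s \<in> stab (braid_act X op d c)"
      using s by (intro three_cycle_mem_stab set_braid_act[OF c]) simp_all
    then show ?thesis using mem_stab_if_pure[OF c d(1,2)] by simp
  qed
  then have alt: "alt_group (length c) \<subseteq> stab c" by (rule stab_c.alt_group_subset_if_three_cycles)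
  have "stab c = sym_group (length c)" if quandle: "quandle X op"
  proof (rule stab_c.eq_sym_group_if_star_transpositions)
    fix s assume s: "0 < s" "s < length c"
    obtain d where d: "braid_word_ok (length c) d" "braid_perm d = id"
      "braid_act X op d c ! 0 = c ! s" "braid_act X op d c ! s = c ! s"
      using equalize[of s] s unfolding c_def by auto
    then have "transpose 0 s \<in> stab (braid_act X op d c)"
      using s by (intro transposition_mem_stab[OF quandle] set_braid_act[OF c]) simp_all
    then show "transpose 0 s \<in> stab c" using mem_stab_if_pure[OF c d(1,2)] by simp
  qed (use period(2) in \<open>simp add: c_def\<close>)
  then show ?thesis using alt by blast
qed

lemma stab_of_generating_tuple:
  assumes conn: "rack_connected X op" and period: "translation_period K" "1 < K"
    and c: "set c \<subseteq> X" "card X * K < length c" "rack_generates X op (set c)"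
  shows "alt_group (length c) \<subseteq> stab c \<and> (quandle X op \<longrightarrow> stab c = sym_group (length c))"
proof -
  obtain d y R where d: "braid_word_ok (length c) d" "braid_act X op d c = replicate K y @ y # R"
    using ex_braid_word_to_block[OF c(1,2)] by blast
  have "set (braid_act X op d c) = set (y # R)" using d(2) period(2) by auto
  then have R: "set (y # R) \<subseteq> X" "rack_generates X op (set (y # R))"
    using set_braid_act[OF c(1) d(1)] rack_generates_braid_act[OF c(1) d(1) c(3)] by simp_all
  have "length (replicate K y @ y # R) = length c" using d(2) length_braid_act by metis
  then have block: "alt_group (length c) \<subseteq> stab (braid_act X op d c)"
      "quandle X op \<Longrightarrow> stab (braid_act X op d c) = sym_group (length c)"
    using stab_of_block[OF conn period R] d(2) by simp_all
  note transport = subset_stab_if_subset_stab_braid_act[OF c(1) d(1)]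
  show ?thesis
  proof (intro conjI impI)
    show "alt_group (length c) \<subseteq> stab c" using transport[OF block(1) alt_group_conj] .
    assume "quandle X op"
    then have "sym_group (length c) \<subseteq> stab c" using transport[OF _ sym_group_conj] block(2) by simp
    then show "stab c = sym_group (length c)"
      using permutation_monoid.subset_sym_group[OF permutation_monoid_stab, of c] by blast
  qed
qed

end

theorem theorem2p4:
  fixes X :: "'a set" and op :: "'a \<Rightarrow> 'a \<Rightarrow> 'a"
  assumes "rack X op" and "finite X" and "rack_connected X op"
  shows "\<exists>N::nat. \<forall>n\<ge>N. \<forall>c::'a list.
           length c = n \<and> set c \<subseteq> X \<and> rack_generates X op (set c) \<longrightarrow>
             (stab_image X op n c = alt_group n \<or> stab_image X op n c = sym_group n) \<and>
             (quandle X op \<longrightarrow> stab_image X op n c = sym_group n)"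
proof -
  interpret finite_rack X op using assms(1,2) by unfold_locales
  obtain K where K: "1 < K" "translation_period K" using ex_translation_period by blast
  show ?thesis
  proof (intro exI[of _ "Suc (card X * K)"] allI impI)
    fix n and c :: "'a list"
    assume "Suc (card X * K) \<le> n" and c: "length c = n \<and> set c \<subseteq> X \<and> rack_generates X op (set c)"
    then have "card X * K < length c" by simp
    then have "alt_group n \<subseteq> stab c" "quandle X op \<longrightarrow> stab c = sym_group n"
      using stab_of_generating_tuple[OF assms(3) K(2,1), of c] c by auto
    then show "(stab_image X op n c = alt_group n \<or> stab_image X op n c = sym_group n) \<and>
        (quandle X op \<longrightarrow> stab_image X op n c = sym_group n)"
      using permutation_monoid.eq_alt_group_or_sym_group[OF permutation_monoid_stab] c by auto
  qed
qed

end
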